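(* There exists a countable family $\mathcal{F}$ of $1$-Lipschitz functions $2^\omega\to 2^\omega$ and an uncountable set $X\subseteq 2^\omega$ such that $X\times X$ is covered by $\mathcal{F}$.
   Context: $2^\omega$ is the Cantor set of all functions $\omega\to\{0,1\}$, equipped with the metric $d(x,y)=2^{-k}$ for $x\neq y$, where $k$ is the smallest natural number with $x\restriction k\neq y\restriction k$ (and $d(x,x)=0$). A function $f$ is $1$-Lipschitz if $d(f(x),f(y))\le d(x,y)$ for all $x,y$. A set $M\subseteq 2^\omega\times 2^\omega$ is covered by a family of functions $\mathcal{F}$ if for every $(x,y)\in M$ there is $f\in\mathcal{F}$ such that either $y=f(x)$ or $x=f(y)$. *)

theory Defs
  imports Complex_Main "HOL-Library.Countable_Set"
begin

type_synonym cantor = "nat \<Rightarrow> bool"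

text \<open>The metric d(x,y) = 2^(-k), k least with x|k \<noteq> y|k, i.e. k = (least n with x n \<noteq> y n) + 1.\<close>
definition cantor_dist :: "cantor \<Rightarrow> cantor \<Rightarrow> real" where
  "cantor_dist x y = (if x = y then 0
     else (1/2) ^ (LEAST k. (\<lambda>i. if i < k then x i else False) \<noteq> (\<lambda>i. if i < k then y i else False)))"

definition lipschitz1 :: "(cantor \<Rightarrow> cantor) \<Rightarrow> bool" where
  "lipschitz1 f \<longleftrightarrow> (\<forall>x y. cantor_dist (f x) (f y) \<le> cantor_dist x y)"

definition covered_by :: "(cantor \<times> cantor) set \<Rightarrow> (cantor \<Rightarrow> cantor) set \<Rightarrow> bool" where
  "covered_by M F \<longleftrightarrow> (\<forall>(x, y) \<in> M. \<exists>f \<in> F. y = f x \<or> x = f y)"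

end

theory Submission
  imports Defs "HOL-Library.Discrete_Functions" "HOL-Library.More_List"
begin

text \<open>
  Call a point sparse if its e-th dyadic block, the bits at positions 2^e ..< 2^(e+1) with
  trailing zeros removed, has length o(2^e). Given countably many sparse points a_0, a_1, ...,
  there are continuum many sparse z from which every a_k is recovered by a 1-Lipschitz map:
  block e of z encodes the trimmed blocks e + 1 of those a_k whose index is below a slowly
  growing bound, so each bit of a_k beyond a finite prefix is read off strictly earlier bits
  of z. The decoders are indexed by k and the prefix, hence countable. By Zorn's lemma there is
  a maximal set of sparse points whose pairs are all covered by the decoders, and the
  extension step shows that a countable such set is never maximal.
\<close>

lemma cantor_dist_eq_Least:
  assumes "x \<noteq> y"
  shows "cantor_dist x y = (1/2) ^ Suc (LEAST i. x i \<noteq> y i)"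
proof -
  define m where "m = (LEAST i. x i \<noteq> y i)"
  have "\<exists>i. x i \<noteq> y i" using assms by auto
  then have m_diff: "x m \<noteq> y m" unfolding m_def by (rule LeastI_ex)
  have below_m: "\<And>i. i < m \<Longrightarrow> x i = y i" unfolding m_def using not_less_Least by blast
  have "(LEAST k. (\<lambda>i. if i < k then x i else False) \<noteq> (\<lambda>i. if i < k then y i else False)) = Suc m"
  proof (rule Least_equality)
    show "(\<lambda>i. if i < Suc m then x i else False) \<noteq> (\<lambda>i. if i < Suc m then y i else False)"
      using m_diff by (metis lessI)
  next
    fix k assume "(\<lambda>i. if i < k then x i else False) \<noteq> (\<lambda>i. if i < k then y i else False)"
    then obtain i where "i < k" "x i \<noteq> y i" by (auto split: if_splits)
    then show "Suc m \<le> k" using below_m by (meson Suc_leI le_less_trans not_less)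
  qed
  then show ?thesis using assms unfolding cantor_dist_def m_def by simp
qed

lemma lipschitz1I:
  assumes "\<And>x y t. (\<forall>i\<le>t. x i = y i) \<Longrightarrow> f x t = f y t"
  shows "lipschitz1 f"
  unfolding lipschitz1_def
proof (intro allI)
  fix x y
  show "cantor_dist (f x) (f y) \<le> cantor_dist x y"
  proof (cases "f x = f y")
    case True
    then show ?thesis unfolding cantor_dist_def by simp
  next
    case False
    then have "x \<noteq> y" by auto
    define m where "m = (LEAST i. x i \<noteq> y i)"
    define m' where "m' = (LEAST i. f x i \<noteq> f y i)"
    have "\<exists>i. f x i \<noteq> f y i" using False by auto
    then have "f x m' \<noteq> f y m'" unfolding m'_def by (rule LeastI_ex)
    moreover have "f x t = f y t" if "t < m" for t
    proof (rule assms)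
      show "\<forall>i\<le>t. x i = y i" using that not_less_Least[where P = "\<lambda>i. x i \<noteq> y i"]
        unfolding m_def by (meson le_less_trans)
    qed
    ultimately have "m \<le> m'" by (meson not_less)
    then have "((1::real)/2) ^ Suc m' \<le> (1/2) ^ Suc m" by (intro power_decreasing) auto
    then show ?thesis
      unfolding cantor_dist_eq_Least[OF False] cantor_dist_eq_Least[OF \<open>x \<noteq> y\<close>] m_def m'_def .
  qed
qed

lemma floor_log_block: "j < 2 ^ e \<Longrightarrow> floor_log (2 ^ e + j) = e"
  by (intro floor_log_eqI) auto

lemma floor_log_blockE:
  assumes "0 < t"
  obtains j where "t = 2 ^ floor_log t + j" "j < 2 ^ floor_log t"
  using floor_log_exp2_le[OF assms] floor_log_exp2_gt[of t]
  by (metis add_diff_inverse_nat add_less_cancel_left mult_2 not_less)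

definition block :: "cantor \<Rightarrow> nat \<Rightarrow> bool list" where
  "block x e = map (\<lambda>j. x (2 ^ e + j)) [0..<2 ^ e]"

lemma length_block [simp]: "length (block x e) = 2 ^ e"
  by (simp add: block_def)

lemma nth_block: "j < 2 ^ e \<Longrightarrow> block x e ! j = x (2 ^ e + j)"
  by (simp add: block_def)

lemma block_cong: "(\<forall>i<2 ^ Suc e. x i = y i) \<Longrightarrow> block x e = block y e"
  by (simp add: block_def)

definition trim_len :: "cantor \<Rightarrow> nat \<Rightarrow> nat" where
  "trim_len x e = length (strip_while ((=) False) (block x e))"

definition sparse :: "cantor \<Rightarrow> bool" where
  "sparse x \<longleftrightarrow> (\<forall>m. eventually (\<lambda>e. m * trim_len x e \<le> 2 ^ e) sequentially)"

lemma sparse_const_False: "sparse (\<lambda>_. False)"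
proof -
  have "trim_len (\<lambda>_. False) e = 0" for e
    by (simp add: trim_len_def block_def)
  then show ?thesis by (simp add: sparse_def)
qed

lemma strip_while_append_trailing:
  "\<forall>y\<in>set ys. P y \<Longrightarrow> strip_while P (xs @ ys) = strip_while P xs"
  by (induct ys rule: rev_induct) (simp_all flip: append_assoc)

lemma eventually_le_exp2: "eventually (\<lambda>e. c \<le> (2::nat) ^ e) sequentially"
  by (rule eventually_sequentiallyI[of c]) (meson less_exp less_imp_le_nat order_trans)

text \<open>
  A word is encoded bit by bit as \<open>True, b\<close> and closed by \<open>False, False\<close>; the list of words is
  closed by \<open>False, True\<close>, so decoding ignores whatever follows an encoding.
\<close>

fun enc_word :: "bool list \<Rightarrow> bool list" where
  "enc_word [] = [False, False]"
| "enc_word (b # bs) = True # b # enc_word bs"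

fun enc_words :: "bool list list \<Rightarrow> bool list" where
  "enc_words [] = [False, True]"
| "enc_words (w # ws) = enc_word w @ enc_words ws"

fun dec_words :: "bool list \<Rightarrow> bool list list" where
  "dec_words (True # b # r) = (case dec_words r of [] \<Rightarrow> [] | w # ws \<Rightarrow> (b # w) # ws)"
| "dec_words (False # False # r) = [] # dec_words r"
| "dec_words _ = []"

lemma dec_words_enc_word: "dec_words (enc_word w @ r) = w # dec_words r"
  by (induction w) auto

lemma dec_words_enc_words: "dec_words (enc_words ws @ r) = ws"
  by (induction ws) (auto simp: dec_words_enc_word)

lemma length_enc_word: "length (enc_word w) = 2 * length w + 2"
  by (induction w) auto

lemma length_enc_words: "length (enc_words ws) = (\<Sum>w\<leftarrow>ws. 2 * length w + 2) + 2"
  by (induction ws) (auto simp: length_enc_word)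

text \<open>
  Bit t of block e + 1 is taken from the k-th word encoded in block e of z, which lies
  strictly before t; the list s supplies the bits below its length.
\<close>

definition decoder :: "nat \<Rightarrow> bool list \<Rightarrow> cantor \<Rightarrow> cantor" where
  "decoder k s z t = (if t < length s then s ! t else
     case floor_log t of 0 \<Rightarrow> False
     | Suc e \<Rightarrow> nth_default False (nth_default [] (dec_words (block z e)) k) (t - 2 ^ Suc e))"

lemma lipschitz1_decoder: "lipschitz1 (decoder k s)"
proof (rule lipschitz1I)
  fix x y :: cantor and t
  assume xy: "\<forall>i\<le>t. x i = y i"
  have "block x e = block y e" if "floor_log t = Suc e" for e
  proof (rule block_cong)
    have "2 ^ Suc e \<le> t"
      using that floor_log_exp2_le[of t] by (metis floor_log_zero nat.distinct(1) not_gr0)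
    then show "\<forall>i<2 ^ Suc e. x i = y i" using xy by simp
  qed
  then show "decoder k s x t = decoder k s y t"
    unfolding decoder_def by (simp split: nat.split)
qed


locale sparse_family =
  fixes a :: "nat \<Rightarrow> cantor"
  assumes sparse: "sparse (a k)"
begin

text \<open>
  \<open>2 * trim_len (a j) (Suc e) + 2\<close> is the length of the encoded trimmed block e + 1 of a j.
  The factor (k + 2)^2 bounds the total length of k + 1 such words by 2^e / (k + 2), which is
  o(2^e) as k grows; this is what keeps the code sparse.
\<close>

definition fits :: "nat \<Rightarrow> nat \<Rightarrow> bool" where
  "fits k e \<longleftrightarrow> (\<forall>j\<le>k. (k + 2)^2 * (2 * trim_len (a j) (Suc e) + 2) \<le> 2 ^ e)"

lemma eventually_fits: "eventually (fits k) sequentially"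
proof -
  define A where "A = (k + 2)^2"
  have "eventually (\<lambda>e. A * (2 * trim_len (a j) (Suc e) + 2) \<le> 2 ^ e) sequentially" for j
  proof -
    have "eventually (\<lambda>e. 8 * A * trim_len (a j) (Suc e) \<le> 2 ^ Suc e) sequentially"
      by (rule eventually_sequentially_Suc[THEN iffD2]) (use sparse[of j] in \<open>simp add: sparse_def\<close>)
    moreover have "eventually (\<lambda>e. 4 * A \<le> 2 ^ e) sequentially"
      by (rule eventually_le_exp2)
    ultimately show ?thesis
      by eventually_elim (simp add: algebra_simps)
  qed
  then have "eventually (\<lambda>e. \<forall>j\<in>{..k}. A * (2 * trim_len (a j) (Suc e) + 2) \<le> 2 ^ e) sequentially"
    by (intro eventually_ball_finite) auto
  then show ?thesis
    unfolding fits_def A_def by (rule eventually_mono) auto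
qed

lemma fits_antimono:
  assumes "k \<le> k'" "fits k' e"
  shows "fits k e"
proof -
  have "(k + 2)^2 \<le> (k' + 2)^2" using assms(1) by (simp add: power_mono)
  then show ?thesis using assms unfolding fits_def by (meson le_trans mult_le_mono1)
qed

definition threshold :: "nat \<Rightarrow> nat" where
  "threshold k = (LEAST e0. k + 4 \<le> e0 \<and> (\<forall>e\<ge>e0. fits k e))"

lemma threshold_spec: "k + 4 \<le> threshold k \<and> (\<forall>e\<ge>threshold k. fits k e)"
  unfolding threshold_def
proof (rule LeastI_ex)
  obtain N where "\<forall>e\<ge>N. fits k e"
    using eventually_fits[of k] unfolding eventually_sequentially by blast
  then show "\<exists>e0. k + 4 \<le> e0 \<and> (\<forall>e\<ge>e0. fits k e)"
    by (intro exI[of _ "max N (k + 4)"]) auto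
qed

lemma threshold_ge: "k + 4 \<le> threshold k"
  using threshold_spec by blast

lemma fits_threshold: "threshold k \<le> e \<Longrightarrow> fits k e"
  using threshold_spec by blast

lemma mono_threshold: "mono threshold"
proof (rule monoI)
  fix k k' :: nat
  assume "k \<le> k'"
  then have "k + 4 \<le> threshold k' \<and> (\<forall>e\<ge>threshold k'. fits k e)"
    using threshold_spec[of k'] fits_antimono by auto
  then show "threshold k \<le> threshold k'"
    unfolding threshold_def[of k] by (rule Least_le)
qed

definition active :: "nat \<Rightarrow> nat" where
  "active e = (LEAST k. e < threshold k)"

lemma less_active_iff: "k < active e \<longleftrightarrow> threshold k \<le> e"
proof
  assume "k < active e"
  then show "threshold k \<le> e"
    using not_less_Least[of k "\<lambda>k. e < threshold k"] unfolding active_def by simp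
next
  have "e < threshold e" using threshold_ge[of e] by simp
  then have "e < threshold (active e)"
    unfolding active_def by (rule LeastI)
  moreover assume "threshold k \<le> e"
  ultimately show "k < active e"
    by (meson monoD mono_threshold not_le order.trans)
qed

lemma eventually_less_active: "eventually (\<lambda>e. k < active e) sequentially"
  by (rule eventually_sequentiallyI[of "threshold k"]) (simp add: less_active_iff)

text \<open>
  The entry w (e - 4) makes the code injective in w; entry k + 1 carries block e + 1 of a k.
  Blocks below 4 stay empty, as even the shortest encoding needs 6 bits.
\<close>

definition payload :: "cantor \<Rightarrow> nat \<Rightarrow> bool list list" where
  "payload w e = [w (e - 4)] # map (\<lambda>k. strip_while ((=) False) (block (a k) (Suc e))) [0..<active e]"

definition code_block :: "cantor \<Rightarrow> nat \<Rightarrow> bool list" where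
  "code_block w e = (if e < 4 then [] else enc_words (payload w e))"

definition code :: "cantor \<Rightarrow> cantor" where
  "code w t = nth_default False (code_block w (floor_log t)) (t - 2 ^ floor_log t)"

definition payload_size :: "nat \<Rightarrow> nat" where
  "payload_size e = (\<Sum>k<active e. 2 * trim_len (a k) (Suc e) + 2)"

lemma length_code_block: "4 \<le> e \<Longrightarrow> length (code_block w e) = payload_size e + 6"
  unfolding code_block_def payload_def payload_size_def
  by (simp add: length_enc_words trim_len_def interv_sum_list_conv_sum_set_nat atLeast0LessThan)

lemma payload_size_bound: "(active e + 1) * payload_size e \<le> 2 ^ e"
proof (cases "active e")
  case 0
  then show ?thesis by (simp add: payload_size_def)
next
  case (Suc K)
  then have "fits K e" using less_active_iff[of K e] fits_threshold by simp
  then have "(K + 2)^2 * (2 * trim_len (a k) (Suc e) + 2) \<le> 2 ^ e" if "k \<in> {..<Suc K}" for k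
    using that unfolding fits_def by simp
  then have "(\<Sum>k<Suc K. (K + 2)^2 * (2 * trim_len (a k) (Suc e) + 2)) \<le> of_nat (card {..<Suc K}) * 2 ^ e"
    by (rule sum_bounded_above)
  then have "(K + 2)^2 * payload_size e \<le> Suc K * 2 ^ e"
    by (simp only: payload_size_def Suc sum_distrib_left card_lessThan of_nat_id)
  also have "\<dots> \<le> (K + 2) * 2 ^ e" by simp
  finally have "(K + 2) * ((K + 2) * payload_size e) \<le> (K + 2) * 2 ^ e"
    by (simp only: power2_eq_square mult.assoc)
  then have "(K + 2) * payload_size e \<le> 2 ^ e"
    by (subst (asm) mult_le_cancel1) simp
  then show ?thesis using Suc by simp
qed

lemma double_payload_size_le: "2 * payload_size e \<le> 2 ^ e"
proof (cases "active e")
  case 0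
  then show ?thesis by (simp add: payload_size_def)
next
  case (Suc K)
  then have "2 * payload_size e \<le> (active e + 1) * payload_size e"
    by (intro mult_le_mono1) simp
  then show ?thesis using payload_size_bound by (rule order_trans)
qed

lemma length_code_block_le: "length (code_block w e) \<le> 2 ^ e"
proof (cases "e < 4")
  case True
  then show ?thesis by (simp add: code_block_def)
next
  case False
  then have "(2::nat) ^ 4 \<le> 2 ^ e" by (intro power_increasing) auto
  then show ?thesis using length_code_block[of e w] double_payload_size_le[of e] False by simp
qed

lemma block_code:
  "block (code w) e = code_block w e @ replicate (2 ^ e - length (code_block w e)) False"
proof (rule nth_equalityI)
  show "length (block (code w) e) = length (code_block w e @ replicate (2 ^ e - length (code_block w e)) False)"
    using length_code_block_le[of w e] by simp
next
  fix j assume "j < length (block (code w) e)"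
  then have j: "j < 2 ^ e" by simp
  have "block (code w) e ! j = nth_default False (code_block w e) j"
    using j by (simp add: nth_block code_def floor_log_block)
  also have "\<dots> = nth_default False (code_block w e @ replicate (2 ^ e - length (code_block w e)) False) j"
    by simp
  also have "\<dots> = (code_block w e @ replicate (2 ^ e - length (code_block w e)) False) ! j"
    using j length_code_block_le[of w e] by (intro nth_default_nth) simp
  finally show "block (code w) e ! j = (code_block w e @ replicate (2 ^ e - length (code_block w e)) False) ! j" .
qed

lemma dec_words_block_code: "4 \<le> e \<Longrightarrow> dec_words (block (code w) e) = payload w e"
  by (simp add: block_code code_block_def dec_words_enc_words)

lemma trim_len_code_le: "trim_len (code w) e \<le> length (code_block w e)"
  by (simp add: trim_len_def block_code strip_while_append_trailing length_strip_while_le)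

lemma sparse_code: "sparse (code w)"
  unfolding sparse_def
proof
  fix m
  have "eventually (\<lambda>e. 2 * m < active e) sequentially"
    by (rule eventually_less_active)
  moreover have "eventually (\<lambda>e. 12 * m \<le> 2 ^ e) sequentially"
    by (rule eventually_le_exp2)
  moreover have "eventually (\<lambda>e. 4 \<le> e) sequentially"
    by (rule eventually_ge_at_top)
  ultimately show "eventually (\<lambda>e. m * trim_len (code w) e \<le> 2 ^ e) sequentially"
  proof eventually_elim
    case (elim e)
    have "2 * m * payload_size e \<le> (active e + 1) * payload_size e"
      using elim(1) by (intro mult_le_mono1) simp
    then have "2 * (m * payload_size e) \<le> 2 ^ e"
      using payload_size_bound[of e] by simp
    moreover have "trim_len (code w) e \<le> payload_size e + 6"
      using trim_len_code_le[of w e] length_code_block[OF elim(3), of w] by simp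
    then have "m * trim_len (code w) e \<le> m * payload_size e + 6 * m"
      by (metis add_mult_distrib2 mult.commute mult_le_mono2)
    ultimately show ?case using elim(2) by linarith
  qed
qed

lemma inj_code: "inj code"
proof (rule injI)
  fix w w' assume "code w = code w'"
  then have "payload w (n + 4) = payload w' (n + 4)" for n
    using dec_words_block_code[of "n + 4"] by (metis le_add2)
  then show "w = w'" by (auto simp: payload_def)
qed

lemma decoder_code: "decoder (Suc k) (map (a k) [0..<2 ^ Suc (threshold k)]) (code w) = a k"
proof
  fix t
  define s where "s = map (a k) [0..<2 ^ Suc (threshold k)]"
  show "decoder (Suc k) s (code w) t = a k t"
  proof (cases "t < length s")
    case True
    then show ?thesis by (simp add: decoder_def s_def)
  next
    case False
    then have "2 ^ Suc (threshold k) \<le> t" by (simp add: s_def)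
    then have "0 < t"
      by (rule less_le_trans[rotated]) simp
    have "Suc (threshold k) \<le> floor_log t"
      using floor_log_le_iff[OF \<open>2 ^ Suc (threshold k) \<le> t\<close>] by simp
    then obtain e where e: "floor_log t = Suc e" "threshold k \<le> e"
      by (metis Suc_le_D Suc_le_mono)
    obtain j where t: "t = 2 ^ Suc e + j" "j < 2 ^ Suc e"
      using floor_log_blockE[OF \<open>0 < t\<close>] e(1) by metis
    have "4 \<le> e" using threshold_ge[of k] e(2) by simp
    moreover have "k < active e" using e(2) by (simp add: less_active_iff)
    ultimately have "nth_default [] (dec_words (block (code w) e)) (Suc k)
        = strip_while ((=) False) (block (a k) (Suc e))"
      by (simp add: dec_words_block_code payload_def nth_default_nth)
    then have "decoder (Suc k) s (code w) t = nth_default False (block (a k) (Suc e)) j"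
      using False e(1) t by (simp add: decoder_def)
    also have "\<dots> = a k t"
      using t by (simp add: nth_default_nth nth_block)
    finally show ?thesis .
  qed
qed

end

definition decoders :: "(cantor \<Rightarrow> cantor) set" where
  "decoders = insert id (range (\<lambda>(k, s). decoder k s))"

lemma countable_decoders: "countable decoders"
  by (simp add: decoders_def)

lemma lipschitz1_decoders: "f \<in> decoders \<Longrightarrow> lipschitz1 f"
  unfolding decoders_def using lipschitz1_decoder by (auto intro: lipschitz1I)

lemma uncountable_UNIV_cantor: "uncountable (UNIV :: cantor set)"
proof
  assume "countable (UNIV :: cantor set)"
  then obtain h :: "nat \<Rightarrow> cantor" where "range h = UNIV"
    using range_from_nat_into[OF UNIV_not_empty] by blast
  then obtain k where "h k = (\<lambda>n. \<not> h n n)" by (metis UNIV_I rangeE)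
  then have "h k k \<longleftrightarrow> \<not> h k k" by (rule fun_cong)
  then show False by blast
qed

lemma countable_sparse_enumeration:
  assumes "countable X" "X \<subseteq> Collect sparse"
  obtains a where "sparse_family a" "X \<subseteq> range a"
proof (cases "X = {}")
  case True
  then show ?thesis
    using that[of "\<lambda>_. \<lambda>_. False"] sparse_const_False by (simp add: sparse_family_def)
next
  case False
  have "sparse_family (from_nat_into X)"
    using assms(2) from_nat_into[OF False] by (auto simp: sparse_family_def)
  moreover have "X \<subseteq> range (from_nat_into X)"
    using assms(1) by (simp add: subset_range_from_nat_into)
  ultimately show ?thesis by (rule that)
qed

lemma exists_sparse_coding:
  assumes "countable X" "X \<subseteq> Collect sparse"
  shows "\<exists>z. sparse z \<and> z \<notin> X \<and> (\<forall>x\<in>X. \<exists>f\<in>decoders. x = f z)"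
proof -
  obtain a where "sparse_family a" and X_enum: "X \<subseteq> range a"
    using countable_sparse_enumeration assms .
  interpret sparse_family a by fact
  have "uncountable (range code)"
    using uncountable_UNIV_cantor inj_code countable_image_inj_on by blast
  then have "\<not> range code \<subseteq> X"
    using assms(1) countable_subset by blast
  then obtain w where "code w \<notin> X" by blast
  moreover have "\<exists>f\<in>decoders. x = f (code w)" if x: "x \<in> X" for x
  proof -
    obtain k where "x = a k" using X_enum x by blast
    define s where "s = map (a k) [0..<2 ^ Suc (threshold k)]"
    have "decoder (Suc k) s \<in> decoders"
      unfolding decoders_def by (intro insertI2 image_eqI[where x = "(Suc k, s)"]) simp_all
    moreover have "x = decoder (Suc k) s (code w)"
      using decoder_code[of k w] \<open>x = a k\<close> unfolding s_def by simp
    ultimately show ?thesis by blast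
  qed
  ultimately show ?thesis using sparse_code by blast
qed

lemma covered_by_insert:
  assumes "covered_by (X \<times> X) F" "id \<in> F" "\<forall>x\<in>X. \<exists>f\<in>F. x = f z"
  shows "covered_by (insert z X \<times> insert z X) F"
  unfolding covered_by_def
proof clarify
  fix x y assume "x \<in> insert z X" "y \<in> insert z X"
  then consider "x = z" "y = z" | "x = z" "y \<in> X" | "x \<in> X" "y = z" | "x \<in> X" "y \<in> X"
    by blast
  then show "\<exists>f\<in>F. y = f x \<or> x = f y"
  proof cases
    case 1
    then show ?thesis using assms(2) by (intro bexI[of _ id]) simp_all
  next
    case 2
    then show ?thesis using assms(3) by blast
  next
    case 3
    then show ?thesis using assms(3) by blast
  next
    case 4
    then show ?thesis using assms(1) unfolding covered_by_def by blast
  qed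
qed

lemma uncountable_covered_subset:
  assumes extend: "\<And>X. countable X \<Longrightarrow> X \<subseteq> S \<Longrightarrow> covered_by (X \<times> X) F \<Longrightarrow>
    \<exists>z\<in>S - X. covered_by (insert z X \<times> insert z X) F"
  shows "\<exists>X\<subseteq>S. uncountable X \<and> covered_by (X \<times> X) F"
proof -
  define A where "A = {X. X \<subseteq> S \<and> covered_by (X \<times> X) F}"
  have "\<Union>C \<in> A" if C: "C \<in> chains A" for C
  proof -
    have "\<exists>f\<in>F. y = f x \<or> x = f y" if xy: "x \<in> \<Union>C" "y \<in> \<Union>C" for x y
    proof -
      obtain X Y where XY: "X \<in> C" "Y \<in> C" "x \<in> X" "y \<in> Y"
        using xy by blast
      then have "X \<subseteq> Y \<or> Y \<subseteq> X" "X \<in> A" "Y \<in> A"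
        using C unfolding chains_def chain_subset_def by auto
      then show ?thesis using XY unfolding A_def covered_by_def by blast
    qed
    moreover have "\<Union>C \<subseteq> S" using C unfolding chains_def A_def by blast
    ultimately show ?thesis unfolding A_def covered_by_def by blast
  qed
  then obtain M where "M \<in> A" and maximal: "\<forall>X\<in>A. M \<subseteq> X \<longrightarrow> X = M"
    using Zorn_Lemma by blast
  moreover have "uncountable M"
  proof
    assume "countable M"
    then obtain z where "z \<in> S - M" "covered_by (insert z M \<times> insert z M) F"
      using extend \<open>M \<in> A\<close> unfolding A_def by blast
    then show False using maximal \<open>M \<in> A\<close> unfolding A_def by blast
  qed
  ultimately show ?thesis unfolding A_def by blast
qed

theorem theorem3p1:
  shows "\<exists>F X. countable F \<and> (\<forall>f \<in> F. lipschitz1 f) \<and> uncountable X \<and> covered_by (X \<times> X) F"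
proof -
  have extend: "\<exists>z\<in>Collect sparse - X. covered_by (insert z X \<times> insert z X) decoders"
    if X: "countable X" "X \<subseteq> Collect sparse" "covered_by (X \<times> X) decoders" for X
  proof -
    obtain z where "sparse z" "z \<notin> X" "\<forall>x\<in>X. \<exists>f\<in>decoders. x = f z"
      using exists_sparse_coding[OF X(1,2)] by blast
    moreover have "id \<in> decoders" by (simp add: decoders_def)
    ultimately show ?thesis using covered_by_insert[OF X(3)] by blast
  qed
  obtain X where "uncountable X" "covered_by (X \<times> X) decoders"
    using uncountable_covered_subset[OF extend] by blast
  then show ?thesis
    using countable_decoders lipschitz1_decoders by (intro exI[of _ decoders] exI[of _ X]) blast
qed

end
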